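(* For every $r\ge1$, $$F^r_{\rm Sem}=F_{\rm lin}\Big(\sum_{\mathbf{n}\in A(F)^*}\big(\underbrace{\mathrm{sem}^\bullet\circ\cdots\circ\mathrm{sem}^\bullet}_{r\text{ times}}\big)^{\mathbf{n}}B_{\mathbf{n}}\Big),$$ i.e. one may take ${}_r\mathrm{sem}^\bullet=\mathrm{sem}^\bullet\circ\cdots\circ\mathrm{sem}^\bullet$ ($r$ times).
   Context: Fix $\nu\ge1$, $\lambda\in\mathbb{C}^\nu$, $\lambda\cdot m=\sum_i\lambda_im_i$. Let $f(x)=(e^{\lambda_1}x_1,\dots,e^{\lambda_\nu}x_\nu)+h(x)$ be a local analytic diffeomorphism of $(\mathbb{C}^\nu,0)$, $F(\varphi)=\varphi\circ f$ on $\mathbb{C}[[x]]$, $F_{\rm lin}(x^m)=e^{\lambda\cdot m}x^m$. An operator is homogeneous of degree $n\in\mathbb{Z}^\nu$ if it maps each $x^m$ to a multiple of $x^{m+n}$. Write $F=F_{\rm lin}(\mathrm{Id}+\sum_{n\in A(F)}B_n)$, $B_n$ homogeneous of degree $n$, where $A(F)\subset\mathbb{Z}^\nu$ is taken closed under addition (degrees with zero operator allowed). Words $\mathbf{n}=n_1\cdots n_r$ on $A(F)$ (possibly empty), $B_{\mathbf{n}}=B_{n_1}\circ\cdots\circ B_{n_r}$, $B_\emptyset=\mathrm{Id}$, $\|\mathbf{n}\|=n_1+\dots+n_r$. Moulds are maps from words to $\mathbb{C}$; product $(M\cdot N)^{\mathbf{a}}=\sum_{\mathbf{a}^1\mathbf{a}^2=\mathbf{a}}M^{\mathbf{a}^1}N^{\mathbf{a}^2}$;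 $1^\bullet$ ($1$ on $\emptyset$, else $0$); $I^\bullet$ ($1$ on length-one words, else $0$); $\mathrm{Exp}\,M=\sum_{k\ge0}M^{\cdot k}/k!$ for $M^\emptyset=0$; $e^\Delta(M)^{\mathbf{n}}=e^{-\lambda\cdot\|\mathbf{n}\|}M^{\mathbf{n}}$. Composition: $M\circ N$ is the mould with generating series $\sum_{\mathbf{b}}M^{\mathbf{b}}\Phi_N^{b_1}\cdots\Phi_N^{b_r}$ where $\Phi_N^{c}=\sum_{\mathbf{a}\neq\emptyset,\|\mathbf{a}\|=c}N^{\mathbf{a}}\mathbf{a}$ (the $\mathbf{b}=\emptyset$ term being $M^\emptyset$). Universal moulds: $\mathrm{Log}\,I^\bullet$ is the mould with $\sum(\mathrm{Log}I)^{\mathbf{a}}\mathbf{a}=\log(1+\sum_{a}a)$ ($\log(1+y)=\sum_{k\ge1}(-1)^{k+1}y^k/k$), i.e. $(\mathrm{Log}I)^{\mathbf{a}}=(-1)^{l+1}/l$ for words of length $l\ge1$ and $0$ on $\emptyset$; $\mathrm{dem}^{\mathbf{n}}=(\mathrm{Log}I)^{\mathbf{n}}/(1-e^{\lambda\cdot\|\mathbf{n}\|})$ if $\mathbf{n}\neq\emptyset$ and $e^{\lambda\cdot\|\mathbf{n}\|}\neq1$, and $0$ otherwise; $\mathrm{sem}^\bullet=e^\Delta(\mathrm{Exp}\,\mathrm{dem}^\bullet)\cdot(1^\bullet+I^\bullet)\cdot\mathrm{Exp}(-\mathrm{dem}^\bullet)$. Trimmed form up to order $r$: $F^0_{\rm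 Sem}=F$; given $F^{i-1}_{\rm Sem}=F_{\rm lin}(\mathrm{Id}+\sum_n{}_iB_n)=F_{\rm lin}\exp(\sum_m{}_iD_m)$ with ${}_iB_n$ homogeneous of degree $n$ and ${}_iD_m$ homogeneous derivations of degree $m$, let $\mathbf{V}_i=\sum_{m:\,e^{\lambda\cdot m}\neq1}{}_iD_m/(1-e^{\lambda\cdot m})$ and $F^i_{\rm Sem}=\exp(\mathbf{V}_i)F^{i-1}_{\rm Sem}\exp(-\mathbf{V}_i)$. *)

theory Defs
  imports "HOL-Analysis.Analysis" "HOL-Library.Function_Algebras"
begin

(* Index type 'v (finite, nonempty) plays the role of {1..nu}.
   Exponents of monomials x^m : 'v => nat ; degrees n in Z^nu : 'v => int. *)
type_synonym 'v mon = "'v \<Rightarrow> nat"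
type_synonym 'v ser = "'v mon \<Rightarrow> complex"
type_synonym 'v deg = "'v \<Rightarrow> int"
(* a linear operator T on C[[x]] given by its matrix: T k m = coefficient of x^k in T(x^m) *)
type_synonym 'v op = "'v mon \<Rightarrow> 'v mon \<Rightarrow> complex"
type_synonym 'v mould = "'v deg list \<Rightarrow> complex"

definition tdeg :: "'v::finite mon \<Rightarrow> nat" where
  "tdeg m = (\<Sum>i\<in>UNIV. m i)"

definition mdeg :: "'v mon \<Rightarrow> 'v deg" where
  "mdeg m = (\<lambda>i. int (m i))"

definition unitv :: "'v \<Rightarrow> 'v mon" where
  "unitv j = (\<lambda>i. if i = j then 1 else 0)"

definition ldot :: "('v::finite \<Rightarrow> complex) \<Rightarrow> 'v deg \<Rightarrow> complex" where
  "ldot lam n = (\<Sum>i\<in>UNIV. lam i * of_int (n i))"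

definition ser_one :: "'v ser" where
  "ser_one k = (if k = (\<lambda>_. 0) then 1 else 0)"

definition ser_mult :: "'v ser \<Rightarrow> 'v ser \<Rightarrow> 'v ser" where
  "ser_mult p q k = (\<Sum>j\<in>{j. \<forall>i. j i \<le> k i}. p j * q (\<lambda>i. k i - j i))"

definition ser_pow :: "'v ser \<Rightarrow> nat \<Rightarrow> 'v ser" where
  "ser_pow p n = ((ser_mult p) ^^ n) ser_one"

definition enum_v :: "'v::finite list" where
  "enum_v = (SOME xs. distinct xs \<and> set xs = UNIV)"

(* F(phi) = phi o f : matrix entry (k,m) = coefficient of x^k in prod_i f_i^(m_i) *)
definition comp_op :: "('v::finite \<Rightarrow> 'v ser) \<Rightarrow> 'v op" where
  "comp_op f k m =
     foldr (\<lambda>i acc. ser_mult (ser_pow (f i) (m i)) acc) enum_v ser_one k"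

definition op_id :: "'v op" where
  "op_id k m = (if k = m then 1 else 0)"

definition op_zero :: "'v op" where
  "op_zero k m = 0"

definition op_lin :: "('v::finite \<Rightarrow> complex) \<Rightarrow> 'v op" where
  "op_lin lam k m = (if k = m then exp (ldot lam (mdeg m)) else 0)"

(* composition S o T (for operators not decreasing total degree; only such occur) *)
definition op_comp :: "'v::finite op \<Rightarrow> 'v op \<Rightarrow> 'v op" where
  "op_comp S T k m = (\<Sum>j\<in>{j. tdeg j \<le> tdeg k}. S k j * T j m)"

definition op_minus :: "'v op \<Rightarrow> 'v op \<Rightarrow> 'v op" where
  "op_minus S T k m = S k m - T k m"

definition op_uminus :: "'v op \<Rightarrow> 'v op" where
  "op_uminus S k m = - S k m"

definition op_scale :: "complex \<Rightarrow> 'v op \<Rightarrow> 'v op" where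
  "op_scale c S k m = c * S k m"

definition op_pow :: "'v::finite op \<Rightarrow> nat \<Rightarrow> 'v op" where
  "op_pow T n = ((op_comp T) ^^ n) op_id"

(* exp(N) = sum_j N^j/j!  (N strictly raises total degree, so the series is
   finite on each entry: terms with j > tdeg k vanish) *)
definition op_exp :: "'v::finite op \<Rightarrow> 'v op" where
  "op_exp N k m = (\<Sum>j\<le>tdeg k. op_pow N j k m / of_nat (fact j))"

(* log(Id + N) = sum_{j>=1} (-1)^(j+1) N^j / j  (same finiteness remark) *)
definition op_log1p :: "'v::finite op \<Rightarrow> 'v op" where
  "op_log1p N k m = (\<Sum>j\<in>{1..tdeg k}. (-1) ^ (j + 1) * op_pow N j k m / of_nat j)"

definition hom_part :: "'v op \<Rightarrow> 'v deg \<Rightarrow> 'v op" where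
  "hom_part T n k m = (if mdeg k = mdeg m + n then T k m else 0)"

definition hsum :: "('v deg \<Rightarrow> 'v op) \<Rightarrow> 'v op" where
  "hsum Tf k m = Tf (mdeg k - mdeg m) k m"

(* B_n : F = F_lin (Id + sum_n B_n) *)
definition opB :: "('v::finite \<Rightarrow> complex) \<Rightarrow> ('v \<Rightarrow> 'v ser) \<Rightarrow> 'v deg \<Rightarrow> 'v op" where
  "opB lam f n = hom_part (op_minus (op_comp (op_lin (- lam)) (comp_op f)) op_id) n"

definition opBw :: "('v::finite \<Rightarrow> complex) \<Rightarrow> ('v \<Rightarrow> 'v ser) \<Rightarrow> 'v deg list \<Rightarrow> 'v op" where
  "opBw lam f w = foldr (\<lambda>n acc. op_comp (opB lam f n) acc) w op_id"

definition sem_step :: "('v::finite \<Rightarrow> complex) \<Rightarrow> 'v op \<Rightarrow> 'v op" where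
  "sem_step lam G =
     (let D = op_log1p (op_minus (op_comp (op_lin (- lam)) G) op_id);
          V = hsum (\<lambda>n. if exp (ldot lam n) \<noteq> 1
                         then op_scale (1 / (1 - exp (ldot lam n))) (hom_part D n)
                         else op_zero)
      in op_comp (op_exp V) (op_comp G (op_exp (op_uminus V))))"

definition Fsem :: "('v::finite \<Rightarrow> complex) \<Rightarrow> ('v \<Rightarrow> 'v ser) \<Rightarrow> nat \<Rightarrow> 'v op" where
  "Fsem lam f i = ((sem_step lam) ^^ i) (comp_op f)"

definition mprod :: "'v mould \<Rightarrow> 'v mould \<Rightarrow> 'v mould" where
  "mprod M N a = (\<Sum>i\<le>length a. M (take i a) * N (drop i a))"

definition mone :: "'v mould" where
  "mone a = (if a = [] then 1 else 0)"

definition mI :: "'v mould" where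
  "mI a = (if length a = 1 then 1 else 0)"

definition mpow :: "'v mould \<Rightarrow> nat \<Rightarrow> 'v mould" where
  "mpow M k = ((mprod M) ^^ k) mone"

(* Exp M = sum_k M^{.k}/k!  (for M^[] = 0 only k <= length a contribute) *)
definition mExp :: "'v mould \<Rightarrow> 'v mould" where
  "mExp M a = (\<Sum>k\<le>length a. mpow M k a / of_nat (fact k))"

definition eDelta :: "('v::finite \<Rightarrow> complex) \<Rightarrow> 'v mould \<Rightarrow> 'v mould" where
  "eDelta lam M a = exp (- ldot lam (sum_list a)) * M a"

definition mLogI :: "'v mould" where
  "mLogI a = (if a = [] then 0 else (-1) ^ (length a + 1) / of_nat (length a))"

definition dem :: "('v::finite \<Rightarrow> complex) \<Rightarrow> 'v mould" where
  "dem lam a = (if a \<noteq> [] \<and> exp (ldot lam (sum_list a)) \<noteq> 1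
                then mLogI a / (1 - exp (ldot lam (sum_list a))) else 0)"

definition sem :: "('v::finite \<Rightarrow> complex) \<Rightarrow> 'v mould" where
  "sem lam = mprod (mprod (eDelta lam (mExp (dem lam))) (\<lambda>a. mone a + mI a))
                   (mExp (\<lambda>a. - dem lam a))"

definition mcomp :: "'v mould \<Rightarrow> 'v mould \<Rightarrow> 'v mould" where
  "mcomp M N a = (if a = [] then M [] else 0) +
     (\<Sum>ps\<in>{ps. concat ps = a \<and> ps \<noteq> [] \<and> (\<forall>p\<in>set ps. p \<noteq> [])}.
        M (map sum_list ps) * prod_list (map N ps))"

definition semr :: "('v::finite \<Rightarrow> complex) \<Rightarrow> nat \<Rightarrow> 'v mould" where
  "semr lam r = ((mcomp (sem lam)) ^^ (r - 1)) (sem lam)"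

definition word_sum :: "('v::finite \<Rightarrow> complex) \<Rightarrow> ('v \<Rightarrow> 'v ser) \<Rightarrow> 'v deg set \<Rightarrow> 'v mould \<Rightarrow> 'v op" where
  "word_sum lam f A M k m = infsum (\<lambda>w. M w * opBw lam f w k m) (lists A)"

end

theory Submission
  imports Defs
begin

(* Write Op B M = sum_w M^w B_w for the contraction of a mould M with the words of a family
   B = (B_n) of homogeneous operators raising the total degree.  M |-> Op B M is an algebra
   morphism: it turns the mould product into composition, hence Exp and Log of moulds into exp
   and log of operators, and e^Delta into conjugation by F_lin.  So one trimming step, applied
   to F_lin Op B (1 + I), is a computation with moulds whose result is F_lin Op B sem.
   For a mould S with S^[] = 1 one has Op B S = Id + sum_c B'_c, where B'_c collects the terms
   S^w B_w with w nonempty and ||w|| = c, and moreover Op B' M = Op B (M o S).  Hence a trimming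
   step sends F_lin Op B S = F_lin Op B' (1 + I) to F_lin Op B' sem = F_lin Op B (sem o S).
   Since F = F_lin Op B (1 + I), induction on r gives the theorem.  Every coefficient involved
   is a finite sum. *)

section \<open>Operators that do not lower the total degree\<close>

lemma component_le_tdeg: "j i \<le> tdeg (j::'v::finite mon)"
  unfolding tdeg_def by (rule member_le_sum) auto

lemma finite_components_le: "finite {j::'v::finite mon. \<forall>i. j i \<le> d}"
proof -
  have "{j::'v mon. \<forall>i. j i \<le> d} = PiE UNIV (\<lambda>_. {..d})"
    by (auto simp: PiE_UNIV_domain)
  thus ?thesis by (simp add: finite_PiE)
qed

lemma finite_tdeg_le: "finite {j::'v::finite mon. tdeg j \<le> d}"
  by (rule finite_subset[OF _ finite_components_le[of d]])
    (auto intro: order_trans[OF component_le_tdeg])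

(* op_comp only sums over monomials of total degree at most that of the row index; this is
   the true composition when the right factor does not lower the total degree. *)
definition tdeg_nondecreasing :: "'v::finite op \<Rightarrow> bool" where
  "tdeg_nondecreasing T \<longleftrightarrow> (\<forall>k j. tdeg k < tdeg j \<longrightarrow> T k j = 0)"

lemma op_comp_assoc:
  fixes S T U :: "'v::finite op"
  assumes "tdeg_nondecreasing T"
  shows "op_comp (op_comp S T) U = op_comp S (op_comp T U)"
proof (intro ext)
  fix k m :: "'v mon"
  let ?J = "\<lambda>k. {j::'v mon. tdeg j \<le> tdeg k}"
  have inner: "op_comp T U j m = (\<Sum>l\<in>?J k. T j l * U l m)" if "j \<in> ?J k" for j
    unfolding op_comp_def
    by (rule sum.mono_neutral_left[OF finite_tdeg_le])
      (use that assms in \<open>auto simp: tdeg_nondecreasing_def\<close>)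
  have "op_comp S (op_comp T U) k m = (\<Sum>j\<in>?J k. S k j * (\<Sum>l\<in>?J k. T j l * U l m))"
    unfolding op_comp_def[of S] by (rule sum.cong) (simp_all add: inner)
  also have "\<dots> = (\<Sum>j\<in>?J k. \<Sum>l\<in>?J k. S k j * T j l * U l m)"
    by (simp add: sum_distrib_left mult.assoc)
  also have "\<dots> = (\<Sum>l\<in>?J k. \<Sum>j\<in>?J k. S k j * T j l * U l m)"
    by (rule sum.swap)
  also have "\<dots> = op_comp (op_comp S T) U k m"
    by (simp add: op_comp_def sum_distrib_right)
  finally show "op_comp (op_comp S T) U k m = op_comp S (op_comp T U) k m" by simp
qed

lemma tdeg_nondecreasing_op_comp: "tdeg_nondecreasing T \<Longrightarrow> tdeg_nondecreasing (op_comp S T)"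
  unfolding tdeg_nondecreasing_def op_comp_def by (auto intro!: sum.neutral)

lemma tdeg_nondecreasing_op_lin: "tdeg_nondecreasing (op_lin c)"
  unfolding tdeg_nondecreasing_def op_lin_def by auto

lemma op_comp_nonzero:
  assumes "op_comp S T k m \<noteq> 0"
  obtains j where "tdeg j \<le> tdeg k" "S k j \<noteq> 0" "T j m \<noteq> 0"
  using assms unfolding op_comp_def
  by (auto elim: sum.not_neutral_contains_not_neutral)

lemma op_comp_id_left: "op_comp op_id X = X"
  by (intro ext) (simp add: op_comp_def op_id_def finite_tdeg_le if_distrib if_distribR cong: if_cong)

lemma op_comp_id_right: "tdeg_nondecreasing X \<Longrightarrow> op_comp X op_id = X"
  unfolding op_comp_def op_id_def tdeg_nondecreasing_def
  by (intro ext) (auto simp: finite_tdeg_le if_distrib if_distribR not_le cong: if_cong)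

lemma op_comp_lin_left: "op_comp (op_lin c) X k m = exp (ldot c (mdeg k)) * X k m"
  by (simp add: op_comp_def op_lin_def finite_tdeg_le if_distrib if_distribR cong: if_cong)

lemma op_comp_lin_right:
  "tdeg_nondecreasing X \<Longrightarrow> op_comp X (op_lin c) k m = X k m * exp (ldot c (mdeg m))"
  unfolding op_comp_def op_lin_def tdeg_nondecreasing_def
  by (auto simp: finite_tdeg_le if_distrib if_distribR not_le cong: if_cong)

lemma ldot_add: "ldot lam (a + b) = ldot lam a + ldot lam b"
  unfolding ldot_def by (simp add: distrib_left sum.distrib)

lemma ldot_uminus: "ldot (- lam) a = - ldot lam a"
  unfolding ldot_def by (simp add: sum_negf)

lemma op_lin_uminus_comp_op_lin: "op_comp (op_lin (- lam)) (op_comp (op_lin lam) X) = X"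
  by (intro ext) (simp add: op_comp_lin_left ldot_uminus mult.assoc[symmetric] exp_add[symmetric])

lemma op_lin_comp_op_lin_uminus: "op_comp (op_lin lam) (op_comp (op_lin (- lam)) X) = X"
  by (intro ext) (simp add: op_comp_lin_left ldot_uminus mult.assoc[symmetric] exp_add[symmetric])

section \<open>Words in a family of homogeneous operators\<close>

fun op_word :: "('v::finite deg \<Rightarrow> 'v op) \<Rightarrow> 'v deg list \<Rightarrow> 'v op" where
  "op_word B [] = op_id"
| "op_word B (n # w) = op_comp (B n) (op_word B w)"

definition strict_hom_family :: "('v::finite deg \<Rightarrow> 'v op) \<Rightarrow> bool" where
  "strict_hom_family B \<longleftrightarrow>
     (\<forall>n k m. B n k m \<noteq> 0 \<longrightarrow> mdeg k = mdeg m + n \<and> tdeg m < tdeg k)"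

definition degs_upto :: "'v::finite mon \<Rightarrow> 'v deg set" where
  "degs_upto k =
     (\<lambda>(a, b). mdeg a - mdeg b) ` ({j. tdeg j \<le> tdeg k} \<times> {j. tdeg j \<le> tdeg k})"

definition words_upto :: "'v::finite mon \<Rightarrow> 'v deg list set" where
  "words_upto k = {w. set w \<subseteq> degs_upto k \<and> length w \<le> tdeg k}"

lemma finite_words_upto: "finite (words_upto k)"
  unfolding words_upto_def degs_upto_def
  by (intro finite_lists_length_le finite_imageI finite_cartesian_product finite_tdeg_le)

lemma words_upto_mono: "tdeg j \<le> tdeg k \<Longrightarrow> words_upto j \<subseteq> words_upto k"
  unfolding words_upto_def degs_upto_def by fastforce

lemma take_in_words_upto: "w \<in> words_upto k \<Longrightarrow> take i w \<in> words_upto k"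
  unfolding words_upto_def by (auto dest: in_set_takeD)

lemma drop_in_words_upto: "w \<in> words_upto k \<Longrightarrow> drop i w \<in> words_upto k"
  unfolding words_upto_def by (auto dest: in_set_dropD)

lemma strict_hom_familyD:
  "strict_hom_family B \<Longrightarrow> B n k m \<noteq> 0 \<Longrightarrow> mdeg k = mdeg m + n \<and> tdeg m < tdeg k"
  unfolding strict_hom_family_def by blast

lemma tdeg_nondecreasing_strict_hom: "strict_hom_family B \<Longrightarrow> tdeg_nondecreasing (B n)"
  unfolding strict_hom_family_def tdeg_nondecreasing_def using less_asym by blast

lemma op_word_nonzero:
  assumes "strict_hom_family B" "op_word B w k m \<noteq> 0"
  shows "tdeg m + length w \<le> tdeg k \<and> mdeg k = mdeg m + sum_list w \<and> set w \<subseteq> degs_upto k"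
  using assms(2)
proof (induction w arbitrary: k)
  case Nil
  thus ?case by (auto simp: op_id_def split: if_splits)
next
  case (Cons n w)
  then obtain j where j: "tdeg j \<le> tdeg k" "B n k j \<noteq> 0" "op_word B w j m \<noteq> 0"
    by (auto elim: op_comp_nonzero)
  from strict_hom_familyD[OF assms(1) j(2)] have "mdeg k = mdeg j + n" "tdeg j < tdeg k"
    by auto
  moreover from Cons.IH[OF j(3)]
  have "tdeg m + length w \<le> tdeg j" "mdeg j = mdeg m + sum_list w" "set w \<subseteq> degs_upto j"
    by auto
  moreover have "n \<in> degs_upto k" "degs_upto j \<subseteq> degs_upto k"
    using calculation(1) j(1) unfolding degs_upto_def by (force simp: algebra_simps)+
  ultimately show ?case by (auto simp: algebra_simps)
qed

lemma op_word_support: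
  "strict_hom_family B \<Longrightarrow> {w. op_word B w k m \<noteq> 0} \<subseteq> words_upto k"
  unfolding words_upto_def using op_word_nonzero by fastforce

lemma tdeg_nondecreasing_op_word: "strict_hom_family B \<Longrightarrow> tdeg_nondecreasing (op_word B w)"
  unfolding tdeg_nondecreasing_def using op_word_nonzero by (metis add_leD1 leD)

lemma op_word_append:
  "strict_hom_family B \<Longrightarrow> op_word B (u @ v) = op_comp (op_word B u) (op_word B v)"
  by (induction u) (simp_all add: op_comp_id_left op_comp_assoc tdeg_nondecreasing_op_word)

section \<open>Contracting a mould with the words of a family\<close>

definition mould_op :: "('v::finite deg \<Rightarrow> 'v op) \<Rightarrow> 'v mould \<Rightarrow> 'v op" where
  "mould_op B M k m = (\<Sum>w\<in>{w. op_word B w k m \<noteq> 0}. M w * op_word B w k m)"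

lemma mould_op_eq_sum_superset:
  assumes "finite S" "{w. op_word B w k m \<noteq> 0} \<subseteq> S"
  shows "mould_op B M k m = (\<Sum>w\<in>S. M w * op_word B w k m)"
  unfolding mould_op_def by (rule sum.mono_neutral_left[OF assms]) auto

lemma mould_op_eq_sum_words_upto:
  "strict_hom_family B \<Longrightarrow> mould_op B M k m = (\<Sum>w\<in>words_upto k. M w * op_word B w k m)"
  by (rule mould_op_eq_sum_superset[OF finite_words_upto op_word_support])

lemma mould_op_nonzero:
  assumes "mould_op B M k m \<noteq> 0"
  obtains w where "M w \<noteq> 0" "op_word B w k m \<noteq> 0"
  using assms unfolding mould_op_def by (auto elim: sum.not_neutral_contains_not_neutral)

lemma tdeg_nondecreasing_mould_op: "strict_hom_family B \<Longrightarrow> tdeg_nondecreasing (mould_op B M)"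
  unfolding tdeg_nondecreasing_def by (metis mould_op_nonzero op_word_nonzero add_leD1 leD)

lemma mould_op_cong:
  "(\<And>w. op_word B w k m \<noteq> 0 \<Longrightarrow> M w = N w) \<Longrightarrow> mould_op B M k m = mould_op B N k m"
  unfolding mould_op_def by (rule sum.cong) auto

lemma mould_op_sum:
  "mould_op B (\<lambda>w. \<Sum>j\<in>J. M j w) k m = (\<Sum>j\<in>J. mould_op B (M j) k m)"
  unfolding mould_op_def by (simp add: sum_distrib_right sum.swap[of _ J])

lemma mould_op_add: "mould_op B (\<lambda>w. M w + N w) k m = mould_op B M k m + mould_op B N k m"
  unfolding mould_op_def by (simp add: distrib_right sum.distrib)

lemma mould_op_scale: "mould_op B (\<lambda>w. c * M w) k m = c * mould_op B M k m"
  unfolding mould_op_def by (simp add: sum_distrib_left mult.assoc)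

lemma mould_op_divide: "mould_op B (\<lambda>w. M w / c) k m = mould_op B M k m / c"
  unfolding mould_op_def by (simp add: sum_divide_distrib)

lemma mould_op_uminus: "mould_op B (\<lambda>w. - M w) k m = - mould_op B M k m"
  unfolding mould_op_def by (simp add: sum_negf)

lemma mould_op_mone: "strict_hom_family B \<Longrightarrow> mould_op B mone = op_id"
proof (intro ext)
  fix k m assume B: "strict_hom_family B"
  have "mould_op B mone k m = (\<Sum>w\<in>insert [] (words_upto k). mone w * op_word B w k m)"
    by (rule mould_op_eq_sum_superset) (use op_word_support[OF B] finite_words_upto in auto)
  thus "mould_op B mone k m = op_id k m"
    by (simp add: mone_def finite_words_upto if_distrib if_distribR cong: if_cong)
qed

lemma mould_op_mI:
  assumes B: "strict_hom_family B"
  shows "mould_op B mI k m = B (mdeg k - mdeg m) k m"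
proof -
  let ?c = "mdeg k - mdeg m"
  have "mould_op B mI k m = mould_op B (\<lambda>w. if w = [?c] then 1 else 0) k m"
  proof (rule mould_op_cong)
    fix w assume "op_word B w k m \<noteq> 0"
    from op_word_nonzero[OF B this] show "mI w = (if w = [?c] then 1 else 0)"
      by (auto simp: mI_def length_Suc_conv)
  qed
  also have "\<dots> = (\<Sum>w\<in>insert [?c] (words_upto k). (if w = [?c] then 1 else 0) * op_word B w k m)"
    by (rule mould_op_eq_sum_superset) (use op_word_support[OF B] finite_words_upto in auto)
  finally show ?thesis
    by (simp add: op_comp_id_right tdeg_nondecreasing_strict_hom[OF B] finite_words_upto
        if_distrib if_distribR cong: if_cong)
qed

lemma sum_pairs_eq_sum_splits:
  fixes g :: "'a list \<Rightarrow> 'a list \<Rightarrow> 'b::comm_monoid_add"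
  assumes "finite W" "\<And>w i. w \<in> W \<Longrightarrow> take i w \<in> W" "\<And>w i. w \<in> W \<Longrightarrow> drop i w \<in> W"
    and "\<And>u v. u @ v \<notin> W \<Longrightarrow> g u v = 0"
  shows "(\<Sum>u\<in>W. \<Sum>v\<in>W. g u v) = (\<Sum>w\<in>W. \<Sum>i\<le>length w. g (take i w) (drop i w))"
proof -
  let ?split = "\<lambda>(w, i). (take i w, drop i w)" and ?S = "SIGMA w:W. {..length w}"
  have inj: "inj_on ?split ?S"
    by (rule inj_onI) (clarsimp, metis append_take_drop_id length_take min.absorb2)
  have "(\<Sum>u\<in>W. \<Sum>v\<in>W. g u v) = (\<Sum>p\<in>W \<times> W. g (fst p) (snd p))"
    by (simp add: sum.cartesian_product split_beta)
  also have "\<dots> = (\<Sum>p\<in>?split ` ?S. g (fst p) (snd p))"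
  proof (rule sum.mono_neutral_right)
    show "?split ` ?S \<subseteq> W \<times> W" using assms(2,3) by auto
    show "\<forall>p\<in>W \<times> W - ?split ` ?S. g (fst p) (snd p) = 0"
    proof clarify
      fix u v assume "(u, v) \<notin> ?split ` ?S"
      moreover have "(u, v) \<in> ?split ` ?S" if "u @ v \<in> W"
        by (rule image_eqI[where x="(u @ v, length u)"]) (use that in auto)
      ultimately have "u @ v \<notin> W" by blast
      thus "g (fst (u, v)) (snd (u, v)) = 0" by (simp add: assms(4))
    qed
  qed (use assms(1) in simp)
  also have "\<dots> = (\<Sum>w\<in>W. \<Sum>i\<le>length w. g (take i w) (drop i w))"
    unfolding sum.reindex[OF inj] by (simp add: sum.Sigma[OF assms(1)] split_beta)
  finally show ?thesis .
qed

lemma op_comp_mould_op_eq_sum_pairs: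
  fixes B :: "'v::finite deg \<Rightarrow> 'v op"
  assumes B: "strict_hom_family B"
  shows "op_comp (mould_op B M) (mould_op B N) k m
       = (\<Sum>u\<in>words_upto k. \<Sum>v\<in>words_upto k. M u * N v * op_word B (u @ v) k m)"
proof -
  let ?W = "words_upto k" and ?J = "{j. tdeg j \<le> tdeg k}" and ?op = "op_word B"
  have right: "mould_op B N j m = (\<Sum>v\<in>?W. N v * ?op v j m)" if "tdeg j \<le> tdeg k" for j
    by (rule mould_op_eq_sum_superset[OF finite_words_upto])
      (use that op_word_support[OF B] words_upto_mono in blast)
  have "op_comp (mould_op B M) (mould_op B N) k m
      = (\<Sum>j\<in>?J. (\<Sum>u\<in>?W. M u * ?op u k j) * (\<Sum>v\<in>?W. N v * ?op v j m))"
    unfolding op_comp_def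
  proof (intro sum.cong refl)
    fix j :: "'v mon" assume "j \<in> ?J"
    thus "mould_op B M k j * mould_op B N j m
        = (\<Sum>u\<in>?W. M u * ?op u k j) * (\<Sum>v\<in>?W. N v * ?op v j m)"
      by (simp add: mould_op_eq_sum_words_upto[OF B, of M] right)
  qed
  also have "\<dots> = (\<Sum>j\<in>?J. \<Sum>u\<in>?W. \<Sum>v\<in>?W. M u * N v * (?op u k j * ?op v j m))"
    by (simp add: sum_product mult_ac)
  also have "\<dots> = (\<Sum>u\<in>?W. \<Sum>j\<in>?J. \<Sum>v\<in>?W. M u * N v * (?op u k j * ?op v j m))"
    by (rule sum.swap)
  also have "\<dots> = (\<Sum>u\<in>?W. \<Sum>v\<in>?W. M u * N v * (\<Sum>j\<in>?J. ?op u k j * ?op v j m))"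
    by (simp add: sum.swap[of _ ?J] sum_distrib_left)
  also have "\<dots> = (\<Sum>u\<in>?W. \<Sum>v\<in>?W. M u * N v * ?op (u @ v) k m)"
    by (simp add: op_word_append[OF B] op_comp_def)
  finally show ?thesis .
qed

lemma mould_op_mprod:
  assumes B: "strict_hom_family B"
  shows "mould_op B (mprod M N) = op_comp (mould_op B M) (mould_op B N)"
proof (intro ext)
  fix k m
  have "op_comp (mould_op B M) (mould_op B N) k m
      = (\<Sum>w\<in>words_upto k. \<Sum>i\<le>length w.
           M (take i w) * N (drop i w) * op_word B (take i w @ drop i w) k m)"
    unfolding op_comp_mould_op_eq_sum_pairs[OF B]
    by (rule sum_pairs_eq_sum_splits[OF finite_words_upto take_in_words_upto drop_in_words_upto])
      (use op_word_support[OF B] in auto)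
  thus "mould_op B (mprod M N) k m = op_comp (mould_op B M) (mould_op B N) k m"
    by (simp add: mould_op_eq_sum_words_upto[OF B] mprod_def sum_distrib_right)
qed

lemma mpow_0: "mpow M 0 = mone"
  by (simp add: mpow_def)

lemma mpow_Suc: "mpow M (Suc n) = mprod M (mpow M n)"
  by (simp add: mpow_def)

lemma op_pow_0: "op_pow T 0 = op_id"
  by (simp add: op_pow_def)

lemma op_pow_Suc: "op_pow T (Suc n) = op_comp T (op_pow T n)"
  by (simp add: op_pow_def)

lemma op_pow_mould_op: "strict_hom_family B \<Longrightarrow> op_pow (mould_op B M) j = mould_op B (mpow M j)"
  by (induction j) (simp_all add: op_pow_0 mpow_0 mould_op_mone op_pow_Suc mpow_Suc mould_op_mprod)

lemma mpow_eq_0_if_length_less: "M [] = 0 \<Longrightarrow> length w < j \<Longrightarrow> mpow M j w = 0"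
proof (induction j arbitrary: w)
  case (Suc j)
  have "M (take i w) * mpow M j (drop i w) = 0" if "i \<le> length w" for i
    using Suc that by (cases "i = 0") auto
  thus ?case by (auto simp: mpow_Suc mprod_def intro!: sum.neutral)
qed simp

lemma mpow_mI: "mpow mI j w = (if length w = j then 1 else 0)"
proof (induction j arbitrary: w)
  case 0
  thus ?case by (simp add: mpow_0 mone_def)
next
  case (Suc j)
  have "mI (take i w) * mpow mI j (drop i w) =
          (if i = 1 then (if length w = Suc j then 1 else 0) else 0)" if "i \<le> length w" for i
    using that by (auto simp: mI_def Suc.IH)
  thus ?case by (simp add: mpow_Suc mprod_def)
qed

lemma op_exp_mould_op:
  assumes B: "strict_hom_family B" and "M [] = 0"
  shows "op_exp (mould_op B M) = mould_op B (mExp M)"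
proof (intro ext)
  fix k m
  have "op_exp (mould_op B M) k m
      = mould_op B (\<lambda>w. \<Sum>j\<le>tdeg k. mpow M j w / of_nat (fact j)) k m"
    by (simp only: op_exp_def mould_op_sum mould_op_divide op_pow_mould_op[OF B])
  also have "\<dots> = mould_op B (mExp M) k m"
  proof (rule mould_op_cong)
    fix w assume "op_word B w k m \<noteq> 0"
    hence "length w \<le> tdeg k" using op_word_nonzero[OF B] by fastforce
    thus "(\<Sum>j\<le>tdeg k. mpow M j w / of_nat (fact j)) = mExp M w"
      unfolding mExp_def
      by (intro sum.mono_neutral_right) (auto simp: mpow_eq_0_if_length_less[of M, OF assms(2)])
  qed
  finally show "op_exp (mould_op B M) k m = mould_op B (mExp M) k m" .
qed

lemma op_log1p_mould_op_mI:
  assumes B: "strict_hom_family B"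
  shows "op_log1p (mould_op B mI) = mould_op B mLogI"
proof (intro ext)
  fix k m
  have "op_log1p (mould_op B mI) k m
      = mould_op B (\<lambda>w. \<Sum>j\<in>{1..tdeg k}. (-1) ^ (j + 1) * mpow mI j w / of_nat j) k m"
    by (simp only: op_log1p_def mould_op_sum mould_op_divide mould_op_scale op_pow_mould_op[OF B])
  also have "\<dots> = mould_op B mLogI k m"
  proof (rule mould_op_cong)
    fix w assume "op_word B w k m \<noteq> 0"
    hence "length w \<le> tdeg k" using op_word_nonzero[OF B] by fastforce
    thus "(\<Sum>j\<in>{1..tdeg k}. (-1) ^ (j + 1) * mpow mI j w / of_nat j) = mLogI w"
      by (cases w) (auto simp: mpow_mI mLogI_def if_distrib if_distribR cong: if_cong)
  qed
  finally show "op_log1p (mould_op B mI) k m = mould_op B mLogI k m" .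
qed

lemma mould_op_eDelta:
  assumes B: "strict_hom_family B"
  shows "mould_op B (eDelta lam M) = op_comp (op_lin (- lam)) (op_comp (mould_op B M) (op_lin lam))"
proof (intro ext)
  fix k m
  let ?c = "exp (ldot (- lam) (mdeg k)) * exp (ldot lam (mdeg m))"
  have "mould_op B (eDelta lam M) k m = mould_op B (\<lambda>w. ?c * M w) k m"
  proof (rule mould_op_cong)
    fix w assume "op_word B w k m \<noteq> 0"
    hence "mdeg k = mdeg m + sum_list w" using op_word_nonzero[OF B] by blast
    thus "eDelta lam M w = ?c * M w"
      by (simp add: eDelta_def ldot_add ldot_uminus exp_add[symmetric])
  qed
  thus "mould_op B (eDelta lam M) k m
      = op_comp (op_lin (- lam)) (op_comp (mould_op B M) (op_lin lam)) k m"
    by (simp add: mould_op_scale op_comp_lin_left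
        op_comp_lin_right[OF tdeg_nondecreasing_mould_op[OF B]])
qed

(* the operator V of sem_step for D = mould_op B mLogI *)
lemma mould_op_dem:
  assumes B: "strict_hom_family B"
  shows "hsum (\<lambda>n. if exp (ldot lam n) \<noteq> 1
                   then op_scale (1 / (1 - exp (ldot lam n))) (hom_part (mould_op B mLogI) n)
                   else op_zero) = mould_op B (dem lam)"
proof (intro ext)
  fix k m
  let ?e = "exp (ldot lam (mdeg k - mdeg m))"
  have "mould_op B (dem lam) k m
      = mould_op B (\<lambda>w. (if ?e \<noteq> 1 then 1 / (1 - ?e) else 0) * mLogI w) k m"
  proof (rule mould_op_cong)
    fix w assume "op_word B w k m \<noteq> 0"
    hence "sum_list w = mdeg k - mdeg m" using op_word_nonzero[OF B] by simp
    thus "dem lam w = (if ?e \<noteq> 1 then 1 / (1 - ?e) else 0) * mLogI w"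
      by (auto simp: dem_def mLogI_def)
  qed
  thus "hsum (\<lambda>n. if exp (ldot lam n) \<noteq> 1
                   then op_scale (1 / (1 - exp (ldot lam n))) (hom_part (mould_op B mLogI) n)
                   else op_zero) k m = mould_op B (dem lam) k m"
    by (simp add: mould_op_scale hsum_def op_scale_def hom_part_def op_zero_def)
qed

section \<open>One trimming step\<close>

lemma sem_step_mould_op:
  assumes B: "strict_hom_family B"
  shows "sem_step lam (op_comp (op_lin lam) (mould_op B (\<lambda>a. mone a + mI a)))
       = op_comp (op_lin lam) (mould_op B (sem lam))"
proof -
  let ?L = "op_lin lam" and ?L' = "op_lin (- lam)"
  let ?P = "mould_op B (\<lambda>a. mone a + mI a)"
  let ?E = "mould_op B (mExp (dem lam))" and ?Q = "mould_op B (mExp (\<lambda>a. - dem lam a))"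
  have nondecr: "tdeg_nondecreasing (mould_op B M)" for M
    by (rule tdeg_nondecreasing_mould_op[OF B])
  have log: "op_minus (op_comp ?L' (op_comp ?L ?P)) op_id = mould_op B mI"
    by (intro ext) (simp add: op_lin_uminus_comp_op_lin op_minus_def mould_op_add mould_op_mone[OF B])
  have neg: "op_uminus (mould_op B (dem lam)) = mould_op B (\<lambda>a. - dem lam a)"
    by (intro ext) (simp add: op_uminus_def mould_op_uminus)
  have "sem_step lam (op_comp ?L ?P)
      = op_comp (op_exp (mould_op B (dem lam)))
          (op_comp (op_comp ?L ?P) (op_exp (op_uminus (mould_op B (dem lam)))))"
    unfolding sem_step_def Let_def log op_log1p_mould_op_mI[OF B] mould_op_dem[OF B] ..
  also have "\<dots> = op_comp ?E (op_comp (op_comp ?L ?P) ?Q)"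
    unfolding neg by (simp add: op_exp_mould_op[OF B] dem_def)
  also have "\<dots> = op_comp ?L (op_comp ?L' (op_comp ?E (op_comp ?L (op_comp ?P ?Q))))"
    by (simp add: op_lin_comp_op_lin_uminus op_comp_assoc nondecr)
  also have "\<dots> = op_comp ?L (op_comp (op_comp (op_comp ?L' (op_comp ?E ?L)) ?P) ?Q)"
    by (simp add: op_comp_assoc nondecr tdeg_nondecreasing_op_comp tdeg_nondecreasing_op_lin)
  also have "\<dots> = op_comp ?L (mould_op B (sem lam))"
    unfolding sem_def mould_op_mprod[OF B] mould_op_eDelta[OF B] ..
  finally show ?thesis .
qed

section \<open>Mould composition as substitution of families\<close>

definition splittings :: "'a list \<Rightarrow> 'a list list set" where
  "splittings a = {ps. concat ps = a \<and> (\<forall>p\<in>set ps. p \<noteq> [])}"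

lemma finite_splittings: "finite (splittings a)"
proof -
  have "length ps \<le> length (concat ps)" if "\<forall>p\<in>set ps. p \<noteq> []" for ps :: "'a list list"
    using that
  proof (induction ps)
    case (Cons p ps)
    hence "1 \<le> length p" by (cases p) auto
    with Cons show ?case by simp
  qed simp
  moreover have "length p \<le> length (concat ps)" if "p \<in> set ps" for p :: "'a list" and ps
    using that by (induction ps) auto
  ultimately have "splittings a \<subseteq>
      {ps. set ps \<subseteq> {p. set p \<subseteq> set a \<and> length p \<le> length a} \<and> length ps \<le> length a}"
    unfolding splittings_def by fastforce
  thus ?thesis
    by (rule finite_subset) (intro finite_lists_length_le finite_lists_length_le[of "set a"]; simp)
qed

lemma Nil_in_splittings_iff: "[] \<in> splittings a \<longleftrightarrow> a = []"
  unfolding splittings_def by auto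

lemma splittings_Nil: "splittings [] = {[]}"
  unfolding splittings_def by auto

lemma splittings_eq_image_Cons:
  assumes "a \<noteq> []"
  shows "splittings a
       = (\<lambda>(i, ps). take i a # ps) ` (SIGMA i:{1..length a}. splittings (drop i a))"
proof (intro equalityI subsetI)
  fix qs assume qs: "qs \<in> splittings a"
  then obtain p ps where "qs = p # ps" "p \<noteq> []" "a = p @ concat ps" "\<forall>p\<in>set ps. p \<noteq> []"
    using assms unfolding splittings_def by (cases qs) auto
  thus "qs \<in> (\<lambda>(i, ps). take i a # ps) ` (SIGMA i:{1..length a}. splittings (drop i a))"
    by (intro image_eqI[where x="(length p, ps)"]) (auto simp: splittings_def Suc_le_eq)
qed (use assms in \<open>auto simp: splittings_def\<close>)

lemma sum_splittings_Cons:
  assumes "a \<noteq> []"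
  shows "sum g (splittings a)
       = (\<Sum>i\<in>{1..length a}. \<Sum>ps\<in>splittings (drop i a). g (take i a # ps))"
proof -
  have inj: "inj_on (\<lambda>(i, ps). take i a # ps) (SIGMA i:{1..length a}. splittings (drop i a))"
    by (rule inj_onI) (auto, metis length_take min.absorb2)
  show ?thesis
    unfolding splittings_eq_image_Cons[OF assms] sum.reindex[OF inj]
    by (simp add: sum.Sigma finite_splittings split_beta)
qed

lemma mcomp_eq_sum_splittings:
  "mcomp M S a = (\<Sum>ps\<in>splittings a. M (map sum_list ps) * prod_list (map S ps))"
proof -
  have nonempty: "{ps. concat ps = a \<and> ps \<noteq> [] \<and> (\<forall>p\<in>set ps. p \<noteq> [])} = splittings a - {[]}"
    unfolding splittings_def by auto
  show ?thesis
    unfolding mcomp_def nonempty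
    by (cases "a = []") (simp_all add: splittings_Nil Nil_in_splittings_iff)
qed

definition mould_part :: "'v mould \<Rightarrow> 'v deg \<Rightarrow> 'v mould" where
  "mould_part S c w = (if w \<noteq> [] \<and> sum_list w = c then S w else 0)"

definition subst_family :: "('v::finite deg \<Rightarrow> 'v op) \<Rightarrow> 'v mould \<Rightarrow> 'v deg \<Rightarrow> 'v op" where
  "subst_family B S c = mould_op B (mould_part S c)"

(* the coefficient of B_a in the word operator B'_b *)
definition subst_coeff :: "'v mould \<Rightarrow> 'v deg list \<Rightarrow> 'v mould" where
  "subst_coeff S b a =
     (\<Sum>ps\<in>splittings a. if map sum_list ps = b then prod_list (map S ps) else 0)"

lemma strict_hom_subst_family:
  assumes B: "strict_hom_family B"
  shows "strict_hom_family (subst_family B S)"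
  unfolding strict_hom_family_def
proof (intro allI impI)
  fix n k m assume "subst_family B S n k m \<noteq> 0"
  then obtain w where w: "mould_part S n w \<noteq> 0" "op_word B w k m \<noteq> 0"
    unfolding subst_family_def by (blast elim: mould_op_nonzero)
  from w(1) have "w \<noteq> []" "sum_list w = n" by (auto simp: mould_part_def split: if_splits)
  with op_word_nonzero[OF B w(2)] show "mdeg k = mdeg m + n \<and> tdeg m < tdeg k"
    by (cases w) auto
qed

lemma subst_coeff_Nil: "subst_coeff S [] = mone"
  by (intro ext) (simp add: subst_coeff_def eq_commute[of "[]"] finite_splittings
      Nil_in_splittings_iff mone_def cong: if_cong)

lemma mprod_mould_part_subst_coeff:
  fixes S :: "'v mould"
  shows "mprod (mould_part S c) (subst_coeff S b) = subst_coeff S (c # b)"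
proof
  fix a :: "'v deg list"
  show "mprod (mould_part S c) (subst_coeff S b) a = subst_coeff S (c # b) a"
  proof (cases "a = []")
    case True
    thus ?thesis by (simp add: mprod_def mould_part_def subst_coeff_def splittings_Nil)
  next
    case False
    have "{..length a} = insert 0 {1..length a}" by auto
    hence "mprod (mould_part S c) (subst_coeff S b) a
        = (\<Sum>i\<in>{1..length a}. mould_part S c (take i a) * subst_coeff S b (drop i a))"
      by (simp add: mprod_def mould_part_def)
    also have "\<dots> = (\<Sum>i\<in>{1..length a}. \<Sum>ps\<in>splittings (drop i a).
        if map sum_list (take i a # ps) = c # b then prod_list (map S (take i a # ps)) else 0)"
      using False
      by (intro sum.cong refl)
        (auto simp: subst_coeff_def sum_distrib_left mould_part_def intro!: sum.cong)
    also have "\<dots> = subst_coeff S (c # b) a"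
      unfolding subst_coeff_def by (rule sum_splittings_Cons[OF False, symmetric])
    finally show ?thesis .
  qed
qed

lemma op_word_subst_family:
  "strict_hom_family B \<Longrightarrow> op_word (subst_family B S) b = mould_op B (subst_coeff S b)"
  by (induction b)
    (simp_all add: subst_coeff_Nil mould_op_mone subst_family_def
      mould_op_mprod[symmetric] mprod_mould_part_subst_coeff)

lemma sum_mult_subst_coeff:
  assumes "finite T" "map sum_list ` splittings a \<subseteq> T"
  shows "(\<Sum>b\<in>T. M b * subst_coeff S b a) = mcomp M S a"
proof -
  have "(\<Sum>b\<in>T. M b * subst_coeff S b a) = (\<Sum>ps\<in>splittings a.
          \<Sum>b\<in>T. if map sum_list ps = b then M b * prod_list (map S ps) else 0)"
    unfolding subst_coeff_def sum_distrib_left by (subst sum.swap) (intro sum.cong refl, auto)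
  also have "\<dots> = (\<Sum>ps\<in>splittings a. M (map sum_list ps) * prod_list (map S ps))"
    using assms by (intro sum.cong refl) auto
  finally show ?thesis by (simp add: mcomp_eq_sum_splittings)
qed

lemma mould_op_subst_family:
  fixes B :: "'v::finite deg \<Rightarrow> 'v op"
  assumes B: "strict_hom_family B"
  shows "mould_op (subst_family B S) M = mould_op B (mcomp M S)"
proof (intro ext)
  fix k m :: "'v mon"
  let ?W = "words_upto k"
  let ?T = "?W \<union> (\<Union>a\<in>?W. map sum_list ` splittings a)"
  have fin: "finite ?T" by (simp add: finite_words_upto finite_splittings)
  have "mould_op (subst_family B S) M k m = (\<Sum>b\<in>?T. M b * op_word (subst_family B S) b k m)"
    by (rule mould_op_eq_sum_superset[OF fin])
      (use op_word_support[OF strict_hom_subst_family[OF B]] in blast)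
  also have "\<dots> = (\<Sum>a\<in>?W. (\<Sum>b\<in>?T. M b * subst_coeff S b a) * op_word B a k m)"
    by (simp add: op_word_subst_family[OF B] mould_op_eq_sum_words_upto[OF B]
        sum_distrib_left sum_distrib_right mult.assoc sum.swap[of _ ?T])
  also have "\<dots> = (\<Sum>a\<in>?W. mcomp M S a * op_word B a k m)"
  proof (rule sum.cong[OF refl])
    fix a assume "a \<in> ?W"
    hence "map sum_list ` splittings a \<subseteq> ?T" by blast
    thus "(\<Sum>b\<in>?T. M b * subst_coeff S b a) * op_word B a k m = mcomp M S a * op_word B a k m"
      by (simp add: sum_mult_subst_coeff[OF fin])
  qed
  also have "\<dots> = mould_op B (mcomp M S) k m"
    by (simp add: mould_op_eq_sum_words_upto[OF B])
  finally show "mould_op (subst_family B S) M k m = mould_op B (mcomp M S) k m" .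
qed

lemma mould_op_eq_subst_family:
  fixes B :: "'v::finite deg \<Rightarrow> 'v op"
  assumes B: "strict_hom_family B" and "S [] = 1"
  shows "mould_op B S = mould_op (subst_family B S) (\<lambda>a. mone a + mI a)"
proof (intro ext)
  fix k m :: "'v mon"
  let ?c = "mdeg k - mdeg m"
  have "mould_op B S k m = mould_op B (\<lambda>w. mone w + mould_part S ?c w) k m"
  proof (rule mould_op_cong)
    fix w assume "op_word B w k m \<noteq> 0"
    hence "sum_list w = ?c" using op_word_nonzero[OF B] by simp
    thus "S w = mone w + mould_part S ?c w" using assms(2) by (auto simp: mone_def mould_part_def)
  qed
  thus "mould_op B S k m = mould_op (subst_family B S) (\<lambda>a. mone a + mI a) k m"
    using strict_hom_subst_family[OF B]
    by (simp add: mould_op_add mould_op_mone[OF B] mould_op_mone mould_op_mI subst_family_def)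
qed

lemma sem_step_mould_op_mcomp:
  assumes B: "strict_hom_family B" and "S [] = 1"
  shows "sem_step lam (op_comp (op_lin lam) (mould_op B S))
       = op_comp (op_lin lam) (mould_op B (mcomp (sem lam) S))"
  unfolding mould_op_eq_subst_family[OF B, where S=S, OF assms(2)] sem_step_mould_op[OF strict_hom_subst_family[OF B]]
  by (simp add: mould_op_subst_family[OF B])

section \<open>The diffeomorphism as a mould operator\<close>

definition leading_mon :: "'v::finite ser \<Rightarrow> complex \<Rightarrow> 'v mon \<Rightarrow> bool" where
  "leading_mon p c u \<longleftrightarrow> (\<forall>k. tdeg k \<le> tdeg u \<longrightarrow> p k = (if k = u then c else 0))"

lemma tdeg_add: "tdeg (u + v) = tdeg u + tdeg (v::'v::finite mon)"
  unfolding tdeg_def by (simp add: sum.distrib)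

lemma tdeg_diff_add: "(\<forall>i. j i \<le> k i) \<Longrightarrow> tdeg j + tdeg (\<lambda>i. k i - j i) = tdeg (k::'v::finite mon)"
  unfolding tdeg_def by (simp add: sum.distrib[symmetric])

lemma leading_mon_ser_mult:
  fixes p q :: "'v::finite ser"
  assumes p: "leading_mon p c u" and q: "leading_mon q d v"
  shows "leading_mon (ser_mult p q) (c * d) (u + v)"
  unfolding leading_mon_def
proof (intro allI impI)
  fix k :: "'v mon" assume k: "tdeg k \<le> tdeg (u + v)"
  let ?D = "{j. \<forall>i. j i \<le> k i}"
  have summand: "p j * q (\<lambda>i. k i - j i) = (if j = u \<and> k = u + v then c * d else 0)"
    if j: "j \<in> ?D" for j
  proof (cases "tdeg j < tdeg u")
    case True
    thus ?thesis using p unfolding leading_mon_def by auto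
  next
    case False
    hence "tdeg (\<lambda>i. k i - j i) \<le> tdeg v"
      using j k tdeg_diff_add[of j k] by (simp add: tdeg_add)
    hence qj: "q (\<lambda>i. k i - j i) = (if (\<lambda>i. k i - j i) = v then d else 0)"
      using q unfolding leading_mon_def by blast
    have "tdeg j \<le> tdeg u" if "(\<lambda>i. k i - j i) = v"
      using j k tdeg_diff_add[of j k] that by (simp add: tdeg_add)
    hence "(\<lambda>i. k i - j i) = v \<Longrightarrow> p j = (if j = u then c else 0)"
      using p unfolding leading_mon_def by blast
    moreover have "j = u \<Longrightarrow> (\<lambda>i. k i - j i) = v \<longleftrightarrow> k = u + v"
      using j by (auto simp: fun_eq_iff) (metis le_add_diff_inverse)
    ultimately show ?thesis using qj by auto
  qed
  have "finite ?D"
    by (rule finite_subset[OF _ finite_components_le[of "tdeg k"]])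
      (auto intro: order_trans[OF _ component_le_tdeg])
  thus "ser_mult p q k = (if k = u + v then c * d else 0)"
    unfolding ser_mult_def by (simp add: summand if_distrib if_distribR cong: if_cong, auto)
qed

lemma tdeg_eq_0_iff: "tdeg k = 0 \<longleftrightarrow> k = (\<lambda>_. 0::nat)"
  unfolding tdeg_def by (auto simp: fun_eq_iff)

lemma leading_mon_ser_one: "leading_mon (ser_one :: 'v::finite ser) 1 (\<lambda>_. 0)"
  unfolding leading_mon_def ser_one_def by (auto simp: tdeg_eq_0_iff[unfolded tdeg_def] tdeg_def)

lemma leading_mon_ser_pow:
  "leading_mon p c u \<Longrightarrow> leading_mon (ser_pow p n) (c ^ n) (\<lambda>i. n * u i)"
proof (induction n)
  case 0
  thus ?case using leading_mon_ser_one by (simp add: ser_pow_def)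
next
  case (Suc n)
  have "u + (\<lambda>i. n * u i) = (\<lambda>i. Suc n * u i)" by (simp add: fun_eq_iff)
  thus ?case using leading_mon_ser_mult[OF Suc.prems Suc.IH[OF Suc.prems]]
    by (simp add: ser_pow_def)
qed

lemma tdeg_unitv: "tdeg (unitv j :: 'v::finite mon) = 1"
  unfolding tdeg_def unitv_def by simp

lemma tdeg_eq_1_iff: "tdeg (k::'v::finite mon) = 1 \<longleftrightarrow> (\<exists>j. k = unitv j)"
proof
  assume t: "tdeg k = 1"
  then obtain j where "j \<in> UNIV" "k j \<noteq> 0"
    unfolding tdeg_def by (metis sum.not_neutral_contains_not_neutral one_neq_zero)
  moreover have "sum k {i, j} \<le> tdeg k" if "i \<noteq> j" for i
    unfolding tdeg_def by (rule sum_mono2) auto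
  ultimately have "k = unitv j"
    using t component_le_tdeg[of k j] by (force simp: unitv_def fun_eq_iff)
  thus "\<exists>j. k = unitv j" ..
qed (auto simp: tdeg_unitv)

lemma leading_mon_component:
  assumes "\<forall>i. f i (\<lambda>_. 0) = 0" "\<forall>i j. f i (unitv j) = (if j = i then exp (lam i) else 0)"
  shows "leading_mon (f i) (exp (lam i)) (unitv i)"
  unfolding leading_mon_def tdeg_unitv
proof (intro allI impI)
  fix k :: "'a mon" assume "tdeg k \<le> 1"
  hence "tdeg k = 0 \<or> tdeg k = 1" by linarith
  hence "k = (\<lambda>_. 0) \<or> (\<exists>j. k = unitv j)" unfolding tdeg_eq_0_iff tdeg_eq_1_iff .
  moreover have "(\<lambda>_. 0::nat) \<noteq> unitv i" by (auto simp: unitv_def fun_eq_iff)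
  moreover have "unitv j = unitv i \<longleftrightarrow> j = i" for j
    by (auto simp: unitv_def fun_eq_iff)
  ultimately show "f i k = (if k = unitv i then exp (lam i) else 0)"
    using assms by auto
qed

lemma enum_v_enumerates: "distinct (enum_v :: 'v::finite list)" "set (enum_v :: 'v list) = UNIV"
proof -
  have "\<exists>xs::'v list. distinct xs \<and> set xs = UNIV"
    using finite_distinct_list[of "UNIV::'v set"] by auto
  from someI_ex[OF this] show "distinct (enum_v :: 'v list)" "set (enum_v :: 'v list) = UNIV"
    unfolding enum_v_def by simp_all
qed

lemma leading_mon_comp_op:
  fixes f :: "'v::finite \<Rightarrow> 'v ser"
  assumes "\<forall>i. f i (\<lambda>_. 0) = 0" "\<forall>i j. f i (unitv j) = (if j = i then exp (lam i) else 0)"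
  shows "leading_mon (\<lambda>k. comp_op f k m) (exp (ldot lam (mdeg m))) m"
proof -
  have fold: "leading_mon (foldr (\<lambda>i acc. ser_mult (ser_pow (f i) (m i)) acc) xs ser_one)
          (\<Prod>x\<in>set xs. exp (lam x) ^ m x) (\<lambda>y. if y \<in> set xs then m y else 0)"
    if "distinct xs" for xs
    using that
  proof (induction xs)
    case Nil
    thus ?case using leading_mon_ser_one by simp
  next
    case (Cons x xs)
    have "leading_mon (ser_mult (ser_pow (f x) (m x))
            (foldr (\<lambda>i acc. ser_mult (ser_pow (f i) (m i)) acc) xs ser_one))
          (exp (lam x) ^ m x * (\<Prod>x\<in>set xs. exp (lam x) ^ m x))
          ((\<lambda>y. m x * unitv x y) + (\<lambda>y. if y \<in> set xs then m y else 0))"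
      using Cons leading_mon_ser_mult[OF leading_mon_ser_pow[OF leading_mon_component[OF assms]]]
      by simp
    moreover have "(\<lambda>y. m x * unitv x y) + (\<lambda>y. if y \<in> set xs then m y else 0)
        = (\<lambda>y. if y \<in> set (x # xs) then m y else 0)"
      using Cons.prems by (auto simp: fun_eq_iff unitv_def)
    ultimately show ?case using Cons.prems by simp
  qed
  moreover have "exp (ldot lam (mdeg m)) = (\<Prod>x\<in>UNIV. exp (lam x) ^ m x)"
    unfolding ldot_def mdeg_def by (simp add: exp_sum exp_of_nat_mult[symmetric] mult.commute)
  ultimately show ?thesis
    using fold[OF enum_v_enumerates(1)] by (simp add: enum_v_enumerates(2) comp_op_def[abs_def])
qed

lemma strict_hom_opB:
  fixes f :: "'v::finite \<Rightarrow> 'v ser"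
  assumes "\<forall>i. f i (\<lambda>_. 0) = 0" "\<forall>i j. f i (unitv j) = (if j = i then exp (lam i) else 0)"
  shows "strict_hom_family (opB lam f)"
  unfolding strict_hom_family_def
proof (intro allI impI)
  fix n k m assume nz: "opB lam f n k m \<noteq> 0"
  hence "mdeg k = mdeg m + n" by (simp add: opB_def hom_part_def split: if_splits)
  moreover have "tdeg m < tdeg k"
  proof (rule ccontr)
    assume "\<not> tdeg m < tdeg k"
    hence "comp_op f k m = (if k = m then exp (ldot lam (mdeg m)) else 0)"
      using leading_mon_comp_op[OF assms, of m] unfolding leading_mon_def by simp
    hence "opB lam f n k m = 0"
      by (simp add: opB_def hom_part_def op_minus_def op_comp_lin_left op_id_def ldot_uminus
          exp_add[symmetric])
    with nz show False ..
  qed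
  ultimately show "mdeg k = mdeg m + n \<and> tdeg m < tdeg k" ..
qed

lemma comp_op_eq_mould_op:
  fixes f :: "'v::finite \<Rightarrow> 'v ser"
  assumes "\<forall>i. f i (\<lambda>_. 0) = 0" "\<forall>i j. f i (unitv j) = (if j = i then exp (lam i) else 0)"
  shows "comp_op f = op_comp (op_lin lam) (mould_op (opB lam f) (\<lambda>a. mone a + mI a))"
  using strict_hom_opB[OF assms]
  by (intro ext) (simp add: op_comp_lin_left mould_op_add mould_op_mone mould_op_mI opB_def
      hom_part_def op_minus_def ldot_uminus mult.assoc[symmetric] exp_add[symmetric])

lemma opBw_eq_op_word: "opBw lam f w = op_word (opB lam f) w"
  by (induction w) (simp_all add: opBw_def)

lemma op_word_letters: "op_word B w k m \<noteq> 0 \<Longrightarrow> n \<in> set w \<Longrightarrow> B n \<noteq> op_zero"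
proof (induction w arbitrary: k)
  case (Cons a w)
  then obtain j where "B a k j \<noteq> 0" "op_word B w j m \<noteq> 0"
    by (auto elim: op_comp_nonzero)
  thus ?case using Cons by (cases "n = a") (auto simp: op_zero_def)
qed simp

lemma word_sum_eq_mould_op:
  assumes B: "strict_hom_family (opB lam f)"
    and "\<forall>n. opB lam f n \<noteq> op_zero \<longrightarrow> n \<in> A"
  shows "word_sum lam f A M = mould_op (opB lam f) M"
proof (intro ext)
  fix k m
  let ?S = "{w. op_word (opB lam f) w k m \<noteq> 0}"
  have "?S \<subseteq> lists A"
    using op_word_letters[of "opB lam f"] assms(2) by blast
  hence "word_sum lam f A M k m = infsum (\<lambda>w. M w * op_word (opB lam f) w k m) ?S"
    unfolding word_sum_def opBw_eq_op_word by (intro infsum_cong_neutral) auto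
  also have "\<dots> = mould_op (opB lam f) M k m"
    using finite_subset[OF op_word_support[OF B] finite_words_upto] by (simp add: mould_op_def)
  finally show "word_sum lam f A M k m = mould_op (opB lam f) M k m" .
qed

section \<open>Iterated trimming\<close>

lemma mcomp_Nil: "mcomp M N [] = M []"
  by (simp add: mcomp_eq_sum_splittings splittings_Nil)

lemma sem_Nil: "sem lam [] = 1"
  by (simp add: sem_def mprod_def eDelta_def mExp_def mpow_0 mone_def mI_def ldot_def)

lemma semr_Suc: "r \<ge> 1 \<Longrightarrow> semr lam (Suc r) = mcomp (sem lam) (semr lam r)"
  by (cases r) (auto simp: semr_def)

lemma semr_Nil: "r \<ge> 1 \<Longrightarrow> semr lam r [] = 1"
proof (induction r rule: dec_induct)
  case base
  show ?case by (simp add: semr_def sem_Nil)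
next
  case (step r)
  thus ?case by (simp add: semr_Suc mcomp_Nil sem_Nil)
qed

lemma Fsem_eq_mould_op:
  fixes f :: "'v::finite \<Rightarrow> 'v ser"
  assumes "\<forall>i. f i (\<lambda>_. 0) = 0" "\<forall>i j. f i (unitv j) = (if j = i then exp (lam i) else 0)"
    and "r \<ge> 1"
  shows "Fsem lam f r = op_comp (op_lin lam) (mould_op (opB lam f) (semr lam r))"
  using \<open>r \<ge> 1\<close>
proof (induction r rule: dec_induct)
  case base
  have "Fsem lam f 1 = sem_step lam (comp_op f)"
    by (simp add: Fsem_def)
  also have "\<dots> = op_comp (op_lin lam) (mould_op (opB lam f) (sem lam))"
    by (subst comp_op_eq_mould_op[OF assms(1,2)])
      (rule sem_step_mould_op[OF strict_hom_opB[OF assms(1,2)]])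
  finally show ?case by (simp add: semr_def)
next
  case (step r)
  have "Fsem lam f (Suc r) = sem_step lam (Fsem lam f r)"
    by (simp add: Fsem_def)
  thus ?case
    using sem_step_mould_op_mcomp[OF strict_hom_opB[OF assms(1,2)], where S="semr lam r",
        OF semr_Nil[OF step.hyps(1)]]
    by (simp add: step.IH semr_Suc[OF step.hyps(1)])
qed

theorem mainTheorem5:
  fixes lam :: "'v::finite \<Rightarrow> complex"
    and f :: "'v \<Rightarrow> 'v ser"
    and A :: "'v deg set"
    and r :: nat
  assumes f0: "\<forall>i. f i (\<lambda>_. 0) = 0"
    and flin: "\<forall>i j. f i (unitv j) = (if j = i then exp (lam i) else 0)"
    and fana: "\<exists>\<rho>>0. \<forall>i. (\<lambda>m. norm (f i m) * \<rho> ^ tdeg m) summable_on UNIV"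
    and Asupp: "\<forall>n. opB lam f n \<noteq> op_zero \<longrightarrow> n \<in> A"
    and Aadd: "\<forall>a\<in>A. \<forall>b\<in>A. a + b \<in> A"
    and r1: "r \<ge> 1"
  shows "Fsem lam f r = op_comp (op_lin lam) (word_sum lam f A (semr lam r))"
  using Fsem_eq_mould_op[OF f0 flin r1] word_sum_eq_mould_op[OF strict_hom_opB[OF f0 flin] Asupp]
  by simp

end
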